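(* Let $\Gamma=\{b_1q_1\overline{b_1'}=0,\dots,b_mq_m\overline{b_m'}=0\}\cup\{c_1\le c_1',\dots,c_n\le c_n'\}$ be a set of assumptions, with $q_i\in\Sigma$ and all $b_i,b_i',c_j,c_j'$ Boolean expressions. Let $u=(p_1+\cdots+p_k)^*$ where $\Sigma=\{p_1,\dots,p_k\}$, and $r=b_1q_1\overline{b_1'}+\cdots+b_mq_m\overline{b_m'}+c_1\overline{c_1'}+\cdots+c_n\overline{c_n'}$. Then for every KAT expression $e$, $\mathsf{GS}^\Gamma(e)=\mathsf{GS}(e)\setminus\mathsf{GS}(uru)$.
   Context: Let $\Sigma=\{p_1,\dots,p_k\}$ ($k\ge1$) be a finite set of action symbols and $T=\{t_1,\dots,t_l\}$ ($l\ge1$) a finite set of test symbols. Boolean expressions: $b::=0\mid 1\mid t\mid \overline{b}\mid b_1+b_2\mid b_1 b_2$; KAT expressions (syntactic terms): $e::=p\in\Sigma\mid b\mid e_1+e_2\mid e_1e_2\mid e^*$. $\mathsf{At}$ is the set of atoms (words $b_1\cdots b_l$ with $b_i\in\{t_i,\overline{t_i}\}$), identified with truth assignments to $T$; $\alpha\le b$ means $b$ is true under $\alpha$. Guarded strings: $\mathsf{GS}=(\mathsf{At}\cdot\Sigma)^*\cdot\mathsf{At}$. The fusion product $xy$ is defined only when the last atom of $x$ equals the first atom of $y$, and is the concatenation with one copy of that atom omitted; $X\diamond Y=\{xy\mid x\in X,y\in Y,xy\text{ defined}\}$, $X^0=\mathsf{At}$ in the definition of $\mathsf{GS}$, $X^{n+1}=X\diamond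 X^n$. $\mathsf{GS}(p)=\{\alpha p\beta\mid\alpha,\beta\in\mathsf{At}\}$; $\mathsf{GS}(b)=\{\alpha\in\mathsf{At}\mid\alpha\le b\}$; $\mathsf{GS}(e_1+e_2)=\mathsf{GS}(e_1)\cup\mathsf{GS}(e_2)$; $\mathsf{GS}(e_1e_2)=\mathsf{GS}(e_1)\diamond\mathsf{GS}(e_2)$; $\mathsf{GS}(e^* )=\bigcup_{n\ge0}\mathsf{GS}(e)^n$. Given $\Gamma$ as in the claim, $\mathsf{At}^\Gamma=\{\alpha\in\mathsf{At}\mid \alpha\le c\Rightarrow\alpha\le c'\text{ for all }(c\le c')\in\Gamma\}$. Guarded strings modulo $\Gamma$: $\mathsf{GS}^\Gamma(p)=\{\alpha p\beta\mid\alpha,\beta\in\mathsf{At}^\Gamma\text{ and for every assumption }bp\overline{b'}=0\text{ in }\Gamma\text{ (with this same }p),\ \alpha\le b\Rightarrow\beta\le b'\}$; $\mathsf{GS}^\Gamma(b)=\{\alpha\in\mathsf{At}^\Gamma\mid\alpha\le b\}$; $\mathsf{GS}^\Gamma(e_1+e_2)=\mathsf{GS}^\Gamma(e_1)\cup\mathsf{GS}^\Gamma(e_2)$; $\mathsf{GS}^\Gamma(e_1e_2)=\mathsf{GS}^\Gamma(e_1)\diamond\mathsf{GS}^\Gamma(e_2)$; $\mathsf{GS}^\Gamma(e^* )=\bigcup_{n\ge0}\mathsf{GS}^\Gamma(e)^n$, where here $X^0$ is taken to be $\mathsf{At}^\Gamma$. *)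

theory Defs
  imports Main
begin

datatype 't bexp = BZero | BOne | Test 't | Neg "'t bexp"
  | BPlus "'t bexp" "'t bexp" | BTimes "'t bexp" "'t bexp"

datatype ('p, 't) kat = Act 'p | B "'t bexp" | Plus "('p,'t) kat" "('p,'t) kat"
  | Times "('p,'t) kat" "('p,'t) kat" | Star "('p,'t) kat"

(* atoms = truth assignments to the test symbols *)
type_synonym 't atom = "'t \<Rightarrow> bool"

(* alpha \<le> b *)
fun beval :: "'t atom \<Rightarrow> 't bexp \<Rightarrow> bool" where
  "beval \<alpha> BZero = False"
| "beval \<alpha> BOne = True"
| "beval \<alpha> (Test t) = \<alpha> t"
| "beval \<alpha> (Neg b) = (\<not> beval \<alpha> b)"
| "beval \<alpha> (BPlus b1 b2) = (beval \<alpha> b1 \<or> beval \<alpha> b2)"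
| "beval \<alpha> (BTimes b1 b2) = (beval \<alpha> b1 \<and> beval \<alpha> b2)"

(* guarded string alpha0 p1 alpha1 ... pn alphan, represented as (alpha0, [(p1,alpha1),...,(pn,alphan)]) *)
type_synonym ('p,'t) gstring = "'t atom \<times> ('p \<times> 't atom) list"

definition first_atom :: "('p,'t) gstring \<Rightarrow> 't atom" where
  "first_atom x = fst x"

definition last_atom :: "('p,'t) gstring \<Rightarrow> 't atom" where
  "last_atom x = (if snd x = [] then fst x else snd (last (snd x)))"

(* fusion product (only meaningful when last_atom x = first_atom y) *)
definition fuse :: "('p,'t) gstring \<Rightarrow> ('p,'t) gstring \<Rightarrow> ('p,'t) gstring" where
  "fuse x y = (fst x, snd x @ snd y)"

definition diamond :: "('p,'t) gstring set \<Rightarrow> ('p,'t) gstring set \<Rightarrow> ('p,'t) gstring set" where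
  "diamond X Y = {fuse x y | x y. x \<in> X \<and> y \<in> Y \<and> last_atom x = first_atom y}"

fun gpow :: "'t atom set \<Rightarrow> ('p,'t) gstring set \<Rightarrow> nat \<Rightarrow> ('p,'t) gstring set" where
  "gpow A X 0 = {(\<alpha>, []) | \<alpha>. \<alpha> \<in> A}"
| "gpow A X (Suc n) = diamond X (gpow A X n)"

fun GS :: "('p,'t) kat \<Rightarrow> ('p,'t) gstring set" where
  "GS (Act p) = {(\<alpha>, [(p, \<beta>)]) | \<alpha> \<beta>. True}"
| "GS (B b) = {(\<alpha>, []) | \<alpha>. beval \<alpha> b}"
| "GS (Plus e1 e2) = GS e1 \<union> GS e2"
| "GS (Times e1 e2) = diamond (GS e1) (GS e2)"
| "GS (Star e) = (\<Union>n. gpow UNIV (GS e) n)"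

(* Gamma: H = list of (b, q, b') standing for  b q (not b') = 0,
          C = list of (c, c') standing for  c \<le> c' *)
definition AtG :: "('t bexp \<times> 't bexp) list \<Rightarrow> 't atom set" where
  "AtG C = {\<alpha>. \<forall>(c, c') \<in> set C. beval \<alpha> c \<longrightarrow> beval \<alpha> c'}"

fun GSG :: "('t bexp \<times> 'p \<times> 't bexp) list \<Rightarrow> ('t bexp \<times> 't bexp) list
            \<Rightarrow> ('p,'t) kat \<Rightarrow> ('p,'t) gstring set" where
  "GSG H C (Act p) = {(\<alpha>, [(p, \<beta>)]) | \<alpha> \<beta>. \<alpha> \<in> AtG C \<and> \<beta> \<in> AtG C \<and>
       (\<forall>(b, q, b') \<in> set H. q = p \<longrightarrow> beval \<alpha> b \<longrightarrow> beval \<beta> b')}"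
| "GSG H C (B b) = {(\<alpha>, []) | \<alpha>. \<alpha> \<in> AtG C \<and> beval \<alpha> b}"
| "GSG H C (Plus e1 e2) = GSG H C e1 \<union> GSG H C e2"
| "GSG H C (Times e1 e2) = diamond (GSG H C e1) (GSG H C e2)"
| "GSG H C (Star e) = (\<Union>n. gpow (AtG C) (GSG H C e) n)"

fun sum_list_kat :: "('p,'t) kat list \<Rightarrow> ('p,'t) kat" where
  "sum_list_kat [] = B BZero"
| "sum_list_kat [e] = e"
| "sum_list_kat (e # es) = Plus e (sum_list_kat es)"

definition r_exp :: "('t bexp \<times> 'p \<times> 't bexp) list \<Rightarrow> ('t bexp \<times> 't bexp) list \<Rightarrow> ('p,'t) kat" where
  "r_exp H C = sum_list_kat
     (map (\<lambda>(b, q, b'). Times (Times (B b) (Act q)) (B (Neg b'))) H @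
      map (\<lambda>(c, c'). B (BTimes c (Neg c'))) C)"

definition u_exp :: "'p list \<Rightarrow> ('p,'t) kat" where
  "u_exp ps = Star (sum_list_kat (map Act ps))"

end

theory Submission
  imports Defs
begin

(* A guarded string  a0 p1 a1 ... pn an  is Gamma-consistent if every atom
   satisfies the Boolean assumptions  c <= c'  and every step  a(i-1) pi ai  respects the
   action assumptions  b q ~b' = 0.  Consistency is a local, factor-closed property, so

     (1) GS^Gamma(e) = GS(e) \<inter> Consistent, by induction on e, because fusion and the
         powers X^n commute with intersecting by Consistent;
     (2) GS(u) is the set of all guarded strings, and GS(r) is exactly the set of
         one-atom and one-step "violations" of Gamma;
     (3) hence GS(u r u) is the set of guarded strings having a violating factor, and a
         guarded string has a violating factor iff it is not consistent. *)

fun trace_end :: "'t atom \<Rightarrow> ('p \<times> 't atom) list \<Rightarrow> 't atom" where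
  "trace_end a [] = a"
| "trace_end a ((p, b) # xs) = trace_end b xs"

lemma last_atom_trace_end: "last_atom (a, xs) = trace_end a xs"
  by (induction xs arbitrary: a) (auto simp: last_atom_def)

lemma trace_end_append: "trace_end a (xs @ ys) = trace_end (trace_end a xs) ys"
  by (induction xs arbitrary: a) auto

lemma diamondI:
  "x \<in> X \<Longrightarrow> y \<in> Y \<Longrightarrow> last_atom x = first_atom y \<Longrightarrow> fuse x y \<in> diamond X Y"
  unfolding diamond_def by blast

definition step_allowed ::
  "('t bexp \<times> 'p \<times> 't bexp) list \<Rightarrow> 't atom \<Rightarrow> 'p \<Rightarrow> 't atom \<Rightarrow> bool" where
  "step_allowed H a p b \<longleftrightarrow> (\<forall>(c, q, c') \<in> set H. q = p \<longrightarrow> beval a c \<longrightarrow> beval b c')"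

fun consistent :: "('t bexp \<times> 'p \<times> 't bexp) list \<Rightarrow> ('t bexp \<times> 't bexp) list \<Rightarrow>
    't atom \<Rightarrow> ('p \<times> 't atom) list \<Rightarrow> bool" where
  "consistent H C a [] \<longleftrightarrow> a \<in> AtG C"
| "consistent H C a ((p, b) # xs) \<longleftrightarrow> a \<in> AtG C \<and> step_allowed H a p b \<and> consistent H C b xs"

definition Consistent ::
  "('t bexp \<times> 'p \<times> 't bexp) list \<Rightarrow> ('t bexp \<times> 't bexp) list \<Rightarrow> ('p,'t) gstring set" where
  "Consistent H C = {x. consistent H C (fst x) (snd x)}"

lemma consistent_first_atom: "consistent H C a xs \<Longrightarrow> a \<in> AtG C"
  by (cases xs) auto

lemma consistent_append:
  "consistent H C a (xs @ ys) \<longleftrightarrow> consistent H C a xs \<and> consistent H C (trace_end a xs) ys"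
  by (induction xs arbitrary: a) (auto dest: consistent_first_atom)

lemma diamond_Consistent:
  "diamond (X \<inter> Consistent H C) (Y \<inter> Consistent H C) = diamond X Y \<inter> Consistent H C"
proof
  show "diamond (X \<inter> Consistent H C) (Y \<inter> Consistent H C) \<subseteq> diamond X Y \<inter> Consistent H C"
    by (auto simp: diamond_def Consistent_def fuse_def consistent_append
        last_atom_trace_end first_atom_def)
next
  show "diamond X Y \<inter> Consistent H C \<subseteq> diamond (X \<inter> Consistent H C) (Y \<inter> Consistent H C)"
  proof
    fix x assume "x \<in> diamond X Y \<inter> Consistent H C"
    then obtain a ys b zs where x: "x = fuse (a, ys) (b, zs)" "(a, ys) \<in> X" "(b, zs) \<in> Y"
        and fits: "trace_end a ys = b" and "consistent H C a (ys @ zs)"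
      by (auto simp: diamond_def Consistent_def fuse_def last_atom_trace_end first_atom_def)
    then have "(a, ys) \<in> Consistent H C" "(b, zs) \<in> Consistent H C"
      by (auto simp: Consistent_def consistent_append)
    with x fits show "x \<in> diamond (X \<inter> Consistent H C) (Y \<inter> Consistent H C)"
      by (auto intro!: diamondI simp: last_atom_trace_end first_atom_def)
  qed
qed

lemma gpow_Consistent:
  "gpow (AtG C) (X \<inter> Consistent H C) n = gpow UNIV X n \<inter> Consistent H C"
proof (induction n)
  case 0
  show ?case by (auto simp: Consistent_def)
next
  case (Suc n)
  then show ?case using diamond_Consistent[of X H C "gpow UNIV X n"] by simp
qed

lemma GSG_eq_GS_Consistent: "GSG H C e = GS e \<inter> Consistent H C"
proof (induction e)
  case (Act p)
  show ?case by (auto simp: Consistent_def step_allowed_def)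
next
  case (B b)
  show ?case by (auto simp: Consistent_def)
next
  case (Plus e1 e2)
  then show ?case by auto
next
  case (Times e1 e2)
  then show ?case by (simp add: diamond_Consistent)
next
  case (Star e)
  then show ?case by (simp add: gpow_Consistent)
qed

lemma GS_sum_list_kat: "GS (sum_list_kat es) = \<Union>(GS ` set es)"
  by (induction es rule: sum_list_kat.induct) auto

definition single_steps :: "('p,'t) gstring set" where
  "single_steps = {(\<alpha>, [(p, \<beta>)]) | \<alpha> p \<beta>. True}"

lemma gpow_single_steps:
  "gpow UNIV (single_steps :: ('p,'t) gstring set) n = {x. length (snd x) = n}"
proof (induction n)
  case 0
  show ?case by auto
next
  case (Suc n)
  show ?case
  proof (intro set_eqI iffI)
    fix x :: "('p,'t) gstring"
    assume "x \<in> gpow UNIV single_steps (Suc n)"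
    then obtain y z where x: "x = fuse y z" and "y \<in> single_steps"
        and z: "z \<in> gpow UNIV single_steps n"
      unfolding gpow.simps diamond_def by blast
    then have "length (snd y) = 1"
      by (auto simp: single_steps_def)
    moreover have "length (snd z) = n"
      using z Suc.IH by blast
    ultimately show "x \<in> {x. length (snd x) = Suc n}"
      by (simp add: x fuse_def)
  next
    fix x :: "('p,'t) gstring"
    assume "x \<in> {x. length (snd x) = Suc n}"
    then obtain a pb xs where "x = (a, pb # xs)" and "length xs = n"
      by (cases x) (auto simp: length_Suc_conv)
    moreover obtain p b where "pb = (p, b)"
      by fastforce
    ultimately have x: "x = fuse (a, [(p, b)]) (b, xs)" and "length xs = n"
      by (simp_all add: fuse_def)
    have "(a, [(p, b)]) \<in> single_steps"
      by (auto simp: single_steps_def)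
    moreover have "(b, xs) \<in> gpow UNIV single_steps n"
      using Suc.IH \<open>length xs = n\<close> by simp
    moreover have "last_atom (a, [(p, b)]) = first_atom (b, xs)"
      by (simp add: last_atom_def first_atom_def)
    ultimately show "x \<in> gpow UNIV single_steps (Suc n)"
      unfolding x gpow.simps by (rule diamondI)
  qed
qed

lemma GS_u_exp:
  assumes "set ps = UNIV"
  shows "(GS (u_exp ps) :: ('p,'t) gstring set) = UNIV"
proof -
  have steps: "(GS (sum_list_kat (map Act ps)) :: ('p,'t) gstring set) = single_steps"
    using assms by (auto simp: GS_sum_list_kat single_steps_def)
  have "\<And>x::('p,'t) gstring. x \<in> gpow UNIV single_steps (length (snd x))"
    unfolding gpow_single_steps by simp
  then show ?thesis
    unfolding u_exp_def GS.simps steps by blast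
qed

definition violations ::
  "('t bexp \<times> 'p \<times> 't bexp) list \<Rightarrow> ('t bexp \<times> 't bexp) list \<Rightarrow> ('p,'t) gstring set" where
  "violations H C = {(\<alpha>, zs). (zs = [] \<and> \<alpha> \<notin> AtG C) \<or>
                              (\<exists>q \<beta>. zs = [(q, \<beta>)] \<and> \<not> step_allowed H \<alpha> q \<beta>)}"

lemma GS_action_term:
  "GS (Times (Times (B b) (Act q)) (B (Neg b'))) =
     {(\<alpha>, [(q, \<beta>)]) | \<alpha> \<beta>. beval \<alpha> b \<and> \<not> beval \<beta> b'}"
  (is "?L = ?R")
proof
  show "?L \<subseteq> ?R"
    by (auto simp: diamond_def fuse_def last_atom_def first_atom_def)
next
  show "?R \<subseteq> ?L"
  proof
    fix x assume "x \<in> ?R"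
    then obtain a c where x: "x = fuse (fuse (a, []) (a, [(q, c)])) (c, [])"
        and "beval a b" "\<not> beval c b'"
      by (auto simp: fuse_def)
    then have "fuse (a, []) (a, [(q, c)]) \<in> diamond (GS (B b)) (GS (Act q))"
      by (intro diamondI) (auto simp: last_atom_def first_atom_def)
    moreover have "(c, []) \<in> GS (B (Neg b'))"
      using \<open>\<not> beval c b'\<close> by simp
    moreover have "last_atom (fuse (a, []) (a, [(q, c)])) = first_atom (c, [])"
      by (simp add: fuse_def last_atom_def first_atom_def)
    ultimately show "x \<in> ?L"
      unfolding x GS.simps(4) by (rule diamondI)
  qed
qed

lemma GS_r_exp: "GS (r_exp H C) = violations H C"
proof -
  have action_terms: "GS \<circ> (\<lambda>(b, q, b'). Times (Times (B b) (Act q)) (B (Neg b'))) =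
      (\<lambda>(b, q, b'). {(\<alpha>, [(q, \<beta>)]) | \<alpha> \<beta>. beval \<alpha> b \<and> \<not> beval \<beta> b'})"
    by (auto simp del: GS.simps simp: GS_action_term fun_eq_iff)
  have test_terms: "GS \<circ> (\<lambda>(c, c'). B (BTimes c (Neg c'))) =
      (\<lambda>(c, c'). {(\<alpha>, []) | \<alpha>. beval \<alpha> c \<and> \<not> beval \<alpha> c'})"
    by (auto simp: fun_eq_iff)
  show ?thesis
    unfolding r_exp_def GS_sum_list_kat set_append set_map image_Un image_comp
      action_terms test_terms
    by (auto simp: violations_def AtG_def step_allowed_def)
qed

definition has_violation ::
  "('t bexp \<times> 'p \<times> 't bexp) list \<Rightarrow> ('t bexp \<times> 't bexp) list \<Rightarrow>
    't atom \<Rightarrow> ('p \<times> 't atom) list \<Rightarrow> bool" where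
  "has_violation H C a xs \<longleftrightarrow>
     (\<exists>ys zs ws. xs = ys @ zs @ ws \<and> (trace_end a ys, zs) \<in> violations H C)"

lemma diamond_UNIV_factor:
  "x \<in> diamond (diamond UNIV R) UNIV \<longleftrightarrow>
     (\<exists>ys zs ws. snd x = ys @ zs @ ws \<and> (trace_end (fst x) ys, zs) \<in> R)"
proof
  assume "x \<in> diamond (diamond UNIV R) UNIV"
  then obtain w y z where "x = fuse (fuse y z) w" "z \<in> R" "last_atom y = first_atom z"
    unfolding diamond_def by blast
  then show "\<exists>ys zs ws. snd x = ys @ zs @ ws \<and> (trace_end (fst x) ys, zs) \<in> R"
    by (intro exI[of _ "snd y"] exI[of _ "snd z"] exI[of _ "snd w"])
      (auto simp: fuse_def first_atom_def last_atom_trace_end[symmetric])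
next
  assume "\<exists>ys zs ws. snd x = ys @ zs @ ws \<and> (trace_end (fst x) ys, zs) \<in> R"
  then obtain ys zs ws where x: "snd x = ys @ zs @ ws"
    and r: "(trace_end (fst x) ys, zs) \<in> R" by blast
  define v where "v = fuse (fst x, ys) (trace_end (fst x) ys, zs)"
  have v: "v \<in> diamond UNIV R"
    unfolding v_def using r by (auto intro!: diamondI simp: last_atom_trace_end first_atom_def)
  have "x = fuse v (last_atom v, ws)"
    using x by (cases x) (simp add: v_def fuse_def)
  with v show "x \<in> diamond (diamond UNIV R) UNIV"
    by (metis UNIV_I diamondI first_atom_def fst_conv)
qed

lemma violation_not_consistent: "(a, zs) \<in> violations H C \<Longrightarrow> \<not> consistent H C a zs"
  by (auto simp: violations_def)

(* Step (3b): a trace is inconsistent iff it has a violating factor.  One direction is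
   factor-closedness of consistency; the other locates the first failure by induction. *)
lemma has_violation_iff: "has_violation H C a xs \<longleftrightarrow> \<not> consistent H C a xs"
proof
  assume "has_violation H C a xs"
  then show "\<not> consistent H C a xs"
    by (auto simp: has_violation_def consistent_append trace_end_append
        dest: violation_not_consistent)
next
  assume "\<not> consistent H C a xs"
  then show "has_violation H C a xs"
  proof (induction xs arbitrary: a)
    case Nil
    then show ?case
      unfolding has_violation_def violations_def by (intro exI[of _ "[]"]) auto
  next
    case (Cons pb xs)
    obtain p b where pb: "pb = (p, b)" by fastforce
    consider "\<not> consistent H C a []" | "\<not> step_allowed H a p b" | "\<not> consistent H C b xs"
      using Cons.prems pb by auto
    then show ?case
    proof cases
      case 1
      then show ?thesis unfolding has_violation_def violations_def
        by (intro exI[of _ "[]"] exI[of _ "[]"] exI[of _ "pb # xs"]) auto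
    next
      case 2
      then show ?thesis unfolding has_violation_def violations_def pb
        by (intro exI[of _ "[]"] exI[of _ "[(p, b)]"] exI[of _ xs]) auto
    next
      case 3
      then obtain ys zs ws where "xs = ys @ zs @ ws" "(trace_end b ys, zs) \<in> violations H C"
        using Cons.IH unfolding has_violation_def by blast
      then show ?thesis unfolding has_violation_def pb
        by (intro exI[of _ "(p, b) # ys"] exI[of _ zs] exI[of _ ws]) auto
    qed
  qed
qed

theorem mainTheorem9:
  fixes ps :: "('p::finite) list"
    and H :: "(('t::finite) bexp \<times> 'p \<times> 't bexp) list"
    and C :: "('t bexp \<times> 't bexp) list"
    and e :: "('p, 't) kat"
  assumes "distinct ps" and "set ps = UNIV"
  shows "GSG H C e = GS e - GS (Times (Times (u_exp ps) (r_exp H C)) (u_exp ps))"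
proof -
  have "GS (Times (Times (u_exp ps) (r_exp H C)) (u_exp ps)) =
      diamond (diamond UNIV (violations H C)) UNIV"
    by (simp only: GS.simps GS_u_exp[OF assms(2)] GS_r_exp)
  then have "\<And>x. x \<in> GS (Times (Times (u_exp ps) (r_exp H C)) (u_exp ps)) \<longleftrightarrow>
      has_violation H C (fst x) (snd x)"
    by (simp only: diamond_UNIV_factor has_violation_def)
  then have "GS (Times (Times (u_exp ps) (r_exp H C)) (u_exp ps)) = - Consistent H C"
    by (auto simp: has_violation_iff Consistent_def)
  then show ?thesis
    by (auto simp: GSG_eq_GS_Consistent)
qed

end
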